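(* Let $K$ be a field of characteristic not equal to $2$ and let $S$ be a (unital, not necessarily associative) $K$-algebra with a pseudo-degree function $\chi$. Let $a\in N(S)$ be such that $C_S(a)$ satisfies condition $D(\ell)$ for some $\ell>0$, and let $b\in C_S(a)\cap N_l(S)$. Then there exists a nonzero polynomial $P(s,t)\in K[s,t]$ such that $P(a,b)=0$, where for $P(s,t)=\sum_{i=0}^k f_i(s)t^i$ with $f_i\in K[s]$ one sets $P(a,b)=\sum_{i=0}^k f_i(a)b^i$.
   Context: All algebras are unital but not necessarily associative, and $K$ is embedded in $S$ via the unit. $N_l(S)$ is the set of $x\in S$ with $x(yz)=(xy)z$ for all $y,z\in S$ (so powers of an element of $N_l(S)$ are well defined). The nucleus $N(S)$ is the set of $x\in S$ with $x(yz)=(xy)z$, $(yx)z=y(xz)$ and $(yz)x=y(zx)$ for all $y,z\in S$. $C_S(a)$ denotes the set of elements of $S$ commuting with $a$. A pseudo-degree function on $S$ is a map $\chi:S\to\mathbb{Z}\cup\{-\infty\}$ such that $\chi(x)=-\infty$ iff $x=0$; $\chi(xy)=\chi(x)+\chi(y)$; and $\chi(x+y)\le\max(\chi(x),\chi(y))$ for all $x,y\in S$. For a positive integer $\ell$, a subalgebra $B\subseteq S$ satisfies condition $D(\ell)$ if $\chi(x)\ge0$ for all nonzero $x\in B$, and whenever $b_1,\dots,b_{\ell+1}\in B$ all have the same value under $\chi$, there exist $\alpha_1,\dots,\alpha_{\ell+1}\in K$, not all zero, with $\chi\left(\sum_{i=1}^{\ell+1}\alpha_ib_i\right)<\chi(b_1)$.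 *)

theory Defs
  imports Main "HOL-Library.Extended_Real" "HOL-Computational_Algebra.Polynomial"
begin

definition nonassoc_algebra ::
  "('k::field \<Rightarrow> 'a::ab_group_add \<Rightarrow> 'a) \<Rightarrow> ('a \<Rightarrow> 'a \<Rightarrow> 'a) \<Rightarrow> 'a \<Rightarrow> bool" where
  "nonassoc_algebra sm mul one \<longleftrightarrow>
     module sm \<and>
     (\<forall>x y z. mul (x + y) z = mul x z + mul y z) \<and>
     (\<forall>x y z. mul x (y + z) = mul x y + mul x z) \<and>
     (\<forall>c x y. mul (sm c x) y = sm c (mul x y)) \<and>
     (\<forall>c x y. mul x (sm c y) = sm c (mul x y)) \<and>
     (\<forall>x. mul one x = x \<and> mul x one = x)"

definition left_nucleus :: "('a \<Rightarrow> 'a \<Rightarrow> 'a) \<Rightarrow> 'a set" where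
  "left_nucleus mul = {x. \<forall>y z. mul x (mul y z) = mul (mul x y) z}"

definition nucleus :: "('a \<Rightarrow> 'a \<Rightarrow> 'a) \<Rightarrow> 'a set" where
  "nucleus mul = {x. \<forall>y z. mul x (mul y z) = mul (mul x y) z \<and>
                          mul (mul y x) z = mul y (mul x z) \<and>
                          mul (mul y z) x = mul y (mul z x)}"

definition centralizer :: "('a \<Rightarrow> 'a \<Rightarrow> 'a) \<Rightarrow> 'a \<Rightarrow> 'a set" where
  "centralizer mul a = {x. mul x a = mul a x}"

fun alg_pow :: "('a \<Rightarrow> 'a \<Rightarrow> 'a) \<Rightarrow> 'a \<Rightarrow> 'a \<Rightarrow> nat \<Rightarrow> 'a" where
  "alg_pow mul one x 0 = one"
| "alg_pow mul one x (Suc n) = mul x (alg_pow mul one x n)"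

definition pseudo_degree ::
  "('a::ab_group_add \<Rightarrow> 'a \<Rightarrow> 'a) \<Rightarrow> ('a \<Rightarrow> ereal) \<Rightarrow> bool" where
  "pseudo_degree mul \<chi> \<longleftrightarrow>
     (\<forall>x. \<chi> x \<in> insert (-\<infinity>) (range (\<lambda>n::int. ereal (real_of_int n)))) \<and>
     (\<forall>x. \<chi> x = -\<infinity> \<longleftrightarrow> x = 0) \<and>
     (\<forall>x y. \<chi> (mul x y) = \<chi> x + \<chi> y) \<and>
     (\<forall>x y. \<chi> (x + y) \<le> max (\<chi> x) (\<chi> y))"

definition cond_D ::
  "('k::field \<Rightarrow> 'a::ab_group_add \<Rightarrow> 'a) \<Rightarrow> ('a \<Rightarrow> ereal) \<Rightarrow> nat \<Rightarrow> 'a set \<Rightarrow> bool" where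
  "cond_D sm \<chi> l B \<longleftrightarrow>
     (\<forall>x\<in>B. x \<noteq> 0 \<longrightarrow> \<chi> x \<ge> 0) \<and>
     (\<forall>bs::nat \<Rightarrow> 'a. (\<forall>i\<le>l. bs i \<in> B \<and> bs i \<noteq> 0 \<and> \<chi> (bs i) = \<chi> (bs 0)) \<longrightarrow>
        (\<exists>\<alpha>::nat \<Rightarrow> 'k. (\<exists>i\<le>l. \<alpha> i \<noteq> 0) \<and>
            \<chi> (\<Sum>i\<le>l. sm (\<alpha> i) (bs i)) < \<chi> (bs 0)))"

definition poly_eval1 ::
  "('k::field \<Rightarrow> 'a::ab_group_add \<Rightarrow> 'a) \<Rightarrow> ('a \<Rightarrow> 'a \<Rightarrow> 'a) \<Rightarrow> 'a \<Rightarrow> 'k poly \<Rightarrow> 'a \<Rightarrow> 'a" where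
  "poly_eval1 sm mul one f a = (\<Sum>j\<le>degree f. sm (coeff f j) (alg_pow mul one a j))"

text \<open>P(s,t) = sum_i f_i(s) t^i is represented as a 'k poly poly (outer variable t);
  P(a,b) = sum_i f_i(a) b^i.\<close>
definition poly_eval2 ::
  "('k::field \<Rightarrow> 'a::ab_group_add \<Rightarrow> 'a) \<Rightarrow> ('a \<Rightarrow> 'a \<Rightarrow> 'a) \<Rightarrow> 'a \<Rightarrow> 'k poly poly \<Rightarrow> 'a \<Rightarrow> 'a \<Rightarrow> 'a" where
  "poly_eval2 sm mul one P a b =
     (\<Sum>i\<le>degree P. mul (poly_eval1 sm mul one (coeff P i) a) (alg_pow mul one b i))"

end

theory Submission
  imports Defs
begin

text \<open>
  Since \<open>a\<close> lies in the nucleus, its centralizer \<open>C\<close> is closed under products, so all monomials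
  \<open>a\<^sup>i b\<^sup>j\<close> lie in \<open>C\<close>, and \<open>\<chi>(a\<^sup>i b\<^sup>j) \<le> i \<chi>(a) + j \<chi>(b)\<close>. Condition \<open>D(l)\<close> bounds the number of
  linearly independent elements of \<open>C\<close> of degree \<open>< n\<close> by \<open>l n\<close>: as long as more than \<open>l\<close> of them
  have the top degree, \<open>D(l)\<close> yields a combination of lower degree that can be exchanged for one
  of them. If \<open>d\<close> bounds \<open>\<chi>(a) + \<chi>(b)\<close> and \<open>N = l (d + 1)\<close>, the \<open>(N + 1)\<^sup>2\<close> monomials with
  \<open>i, j \<le> N\<close> have degree \<open>\<le> N d\<close>, and \<open>l (N d + 1) < (N + 1)\<^sup>2\<close>; so they are linearly dependent,
  and the coefficients of a nontrivial relation form \<open>P\<close>.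
\<close>

lemma cond_D_nonneg:
  assumes "cond_D sm chi l B" "x \<in> B" "x \<noteq> 0"
  shows "0 \<le> chi x"
  using assms(1)[unfolded cond_D_def, THEN conjunct1] assms(2,3) by blast

context vector_space
begin

lemma not_in_span_delete_if_coeff_nonzero:
  assumes indep: "independent A" and h: "inj_on h I" "h ` I \<subseteq> A"
    and fin: "finite I" and i0: "i0 \<in> I" "\<alpha> i0 \<noteq> 0"
  shows "(\<Sum>i\<in>I. \<alpha> i *s h i) \<notin> span (A - {h i0})"
proof
  assume "(\<Sum>i\<in>I. \<alpha> i *s h i) \<in> span (A - {h i0})"
  moreover have "(\<Sum>i\<in>I - {i0}. \<alpha> i *s h i) \<in> span (A - {h i0})"
  proof (rule span_sum)
    fix i assume "i \<in> I - {i0}"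
    then have "h i \<in> A - {h i0}"
      using h i0(1) by (auto simp: inj_on_def)
    then show "\<alpha> i *s h i \<in> span (A - {h i0})"
      by (intro span_scale span_base)
  qed
  ultimately have "(\<Sum>i\<in>I. \<alpha> i *s h i) - (\<Sum>i\<in>I - {i0}. \<alpha> i *s h i) \<in> span (A - {h i0})"
    by (rule span_diff)
  then have "\<alpha> i0 *s h i0 \<in> span (A - {h i0})"
    by (simp add: sum.remove[OF fin i0(1)])
  from span_scale[OF this, of "inverse (\<alpha> i0)"]
  have "h i0 \<in> span (A - {h i0})"
    using i0(2) by simp
  then show False
    using indep h(2) i0(1) dependent_def by blast
qed

lemma cond_D_exchange:
  fixes chi :: "'b \<Rightarrow> ereal"
  assumes D: "cond_D scale chi l B" and B: "subspace B"
    and A: "finite A" "independent A" "A \<subseteq> B"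
    and T: "T \<subseteq> A" "l < card T" "\<And>x. x \<in> T \<Longrightarrow> chi x = c"
  obtains x0 y where "x0 \<in> T" "y \<in> B" "chi y < c" "y \<notin> span (A - {x0})"
proof -
  obtain h where h: "bij_betw h {0..<card T} T"
    using ex_bij_betw_nat_finite finite_subset[OF T(1) A(1)] by blast
  have hT: "h i \<in> T" if "i \<le> l" for i
    using that T(2) bij_betwE[OF h] by auto
  have h_inj: "inj_on h {..l}"
    by (rule inj_on_subset[OF bij_betw_imp_inj_on[OF h]]) (use T(2) in auto)
  have "0 \<notin> A"
    using A(2) dependent_zero by blast
  then have "\<forall>i\<le>l. h i \<in> B \<and> h i \<noteq> 0 \<and> chi (h i) = chi (h 0)"
    using hT T(1,3) A(3) by (metis le0 subsetD)
  then obtain \<alpha> i0 where i0: "i0 \<le> l" "\<alpha> i0 \<noteq> 0"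
    and low: "chi (\<Sum>i\<le>l. \<alpha> i *s h i) < chi (h 0)"
    using D unfolding cond_D_def by blast
  show thesis
  proof
    show "h i0 \<in> T" using hT i0(1) .
    show "(\<Sum>i\<le>l. \<alpha> i *s h i) \<in> B"
      using hT T(1) A(3) by (intro subspace_sum[OF B] subspace_scale[OF B]) auto
    show "chi (\<Sum>i\<le>l. \<alpha> i *s h i) < c"
      using low hT T(3) by simp
    show "(\<Sum>i\<le>l. \<alpha> i *s h i) \<notin> span (A - {h i0})"
      using hT T(1) i0 by (intro not_in_span_delete_if_coeff_nonzero[OF A(2) h_inj]) auto
  qed
qed

lemma cond_D_lower_top_level:
  fixes chi :: "'b \<Rightarrow> ereal"
  assumes D: "cond_D scale chi l B" and B: "subspace B"
    and int_valued: "\<And>x. x \<noteq> 0 \<Longrightarrow> \<exists>m::int. chi x = ereal (real_of_int m)"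
    and A: "finite A" "independent A" "A \<subseteq> B" "\<forall>x\<in>A. chi x < ereal (real (Suc n))"
    and top: "l < card {x\<in>A. ereal (real n) \<le> chi x}"
  obtains A' where "finite A'" "independent A'" "A' \<subseteq> B"
    "\<forall>x\<in>A'. chi x < ereal (real (Suc n))" "card A' = card A"
    "card {x\<in>A'. ereal (real n) \<le> chi x} < card {x\<in>A. ereal (real n) \<le> chi x}"
proof -
  define T where "T = {x\<in>A. ereal (real n) \<le> chi x}"
  have level: "chi x = ereal (real n)" if "x \<in> T" for x
  proof -
    have "x \<noteq> 0"
      using that A(2) dependent_zero unfolding T_def by blast
    then obtain m :: int where m: "chi x = ereal (real_of_int m)"
      using int_valued by blast
    with that A(4)
    have "real_of_int (int n) \<le> real_of_int m" "real_of_int m < real_of_int (int n + 1)"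
      unfolding T_def by auto
    then have "m = int n"
      unfolding of_int_le_iff of_int_less_iff by simp
    with m show ?thesis
      by simp
  qed
  have "T \<subseteq> A" "l < card T"
    using top unfolding T_def by auto
  with cond_D_exchange[OF D B A(1-3) _ _ level]
  obtain x0 y where x0: "x0 \<in> T" and y: "y \<in> B" "chi y < ereal (real n)" "y \<notin> span (A - {x0})"
    by blast
  show thesis
  proof
    let ?A' = "insert y (A - {x0})"
    show "finite ?A'" "?A' \<subseteq> B"
      using A(1,3) y(1) by auto
    show "independent ?A'"
      using independent_insertI[OF y(3)] independent_mono[OF A(2)] by blast
    have "chi y < ereal (real (Suc n))"
      using y(2) by (rule order.strict_trans) simp
    then show "\<forall>x\<in>?A'. chi x < ereal (real (Suc n))"
      using A(4) by blast
    have "y \<notin> A - {x0}"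
      by (rule contrapos_nn[OF y(3) span_base])
    moreover have "x0 \<in> A"
      using x0 unfolding T_def by blast
    ultimately show "card ?A' = card A"
      using A(1) by (metis card_Suc_Diff1 card_insert_disjoint finite_Diff)
    have "{x\<in>?A'. ereal (real n) \<le> chi x} = T - {x0}"
      using y(2) unfolding T_def by (auto simp: not_le)
    moreover have "card (T - {x0}) < card T"
      using A(1) x0 unfolding T_def by (intro card_Diff1_less) auto
    ultimately show "card {x\<in>?A'. ereal (real n) \<le> chi x} < card {x\<in>A. ereal (real n) \<le> chi x}"
      unfolding T_def by simp
  qed
qed

lemma card_independent_le_cond_D:
  fixes chi :: "'b \<Rightarrow> ereal"
  assumes D: "cond_D scale chi l B" and B: "subspace B"
    and int_valued: "\<And>x. x \<noteq> 0 \<Longrightarrow> \<exists>m::int. chi x = ereal (real_of_int m)"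
  shows "finite A \<Longrightarrow> independent A \<Longrightarrow> A \<subseteq> B \<Longrightarrow> \<forall>x\<in>A. chi x < ereal (real n)
    \<Longrightarrow> card A \<le> l * n"
proof (induction n arbitrary: A)
  case 0
  have "chi x \<ge> 0" if "x \<in> A" for x
    using cond_D_nonneg[OF D] that "0.prems"(2,3) dependent_zero by blast
  with "0.prems"(4) have "A = {}"
    by (force simp: zero_ereal_def)
  then show ?case by simp
next
  case (Suc n)
  from Suc.prems show ?case
  proof (induction "card {x\<in>A. ereal (real n) \<le> chi x}" arbitrary: A rule: less_induct)
    case less
    define T where "T = {x\<in>A. ereal (real n) \<le> chi x}"
    show ?case
    proof (cases "card T \<le> l")
      case True
      have "card A = card T + card (A - T)"
        using less.prems(1) card_Diff_subset[of T A] card_mono[of A T] unfolding T_def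
        by (simp add: finite_subset)
      moreover have "card (A - T) \<le> l * n"
      proof (rule Suc.IH)
        show "finite (A - T)" "independent (A - T)" "A - T \<subseteq> B"
          using less.prems(1-3) independent_mono[OF less.prems(2)] by auto
        show "\<forall>x\<in>A - T. chi x < ereal (real n)"
          unfolding T_def by (auto simp: not_le)
      qed
      ultimately show ?thesis
        using True by simp
    next
      case False
      then have "l < card {x\<in>A. ereal (real n) \<le> chi x}"
        unfolding T_def by simp
      then obtain A' where A': "finite A'" "independent A'" "A' \<subseteq> B"
        "\<forall>x\<in>A'. chi x < ereal (real (Suc n))" "card A' = card A"
        "card {x\<in>A'. ereal (real n) \<le> chi x} < card {x\<in>A. ereal (real n) \<le> chi x}"
        using cond_D_lower_top_level[OF D B int_valued less.prems(1-4)] by blast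
      from less.hyps[OF A'(6) A'(1-4)] A'(5) show ?thesis
        by simp
    qed
  qed
qed

lemma cond_D_family_dependent:
  fixes chi :: "'b \<Rightarrow> ereal" and f :: "'i \<Rightarrow> 'b"
  assumes D: "cond_D scale chi l B" and B: "subspace B"
    and int_valued: "\<And>x. x \<noteq> 0 \<Longrightarrow> \<exists>m::int. chi x = ereal (real_of_int m)"
    and I: "finite I" "f ` I \<subseteq> B" "\<forall>p\<in>I. chi (f p) < ereal (real n)" "l * n < card I"
  shows "\<exists>c. (\<exists>p\<in>I. c p \<noteq> 0) \<and> (\<Sum>p\<in>I. c p *s f p) = 0"
proof (cases "inj_on f I")
  case True
  have "dependent (f ` I)"
  proof (rule ccontr)
    assume "independent (f ` I)"
    then have "card (f ` I) \<le> l * n"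
      using card_independent_le_cond_D[OF D B int_valued] I by blast
    with I(4) card_image[OF True] show False
      by simp
  qed
  then obtain u where u: "\<exists>v\<in>f ` I. u v \<noteq> 0" "(\<Sum>v\<in>f ` I. u v *s v) = 0"
    unfolding dependent_finite[OF finite_imageI[OF I(1)]] by blast
  have "(\<Sum>p\<in>I. (u \<circ> f) p *s f p) = 0"
    using u(2) by (simp add: sum.reindex[OF True])
  moreover have "\<exists>p\<in>I. (u \<circ> f) p \<noteq> 0"
    using u(1) by auto
  ultimately show ?thesis
    by blast
next
  case False
  then obtain p q where pq: "p \<in> I" "q \<in> I" "p \<noteq> q" "f p = f q"
    unfolding inj_on_def by blast
  define c :: "'i \<Rightarrow> 'a" where "c r = (if r = p then 1 else if r = q then - 1 else 0)" for r
  have "(\<Sum>r\<in>I. c r *s f r) = c p *s f p + (c q *s f q + (\<Sum>r\<in>I - {p} - {q}. c r *s f r))"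
    using pq I(1) by (simp add: sum.remove[of I p] sum.remove[of "I - {p}" q])
  also have "\<dots> = 0"
    using pq by (simp add: c_def)
  finally have "(\<Sum>r\<in>I. c r *s f r) = 0" .
  moreover have "c p \<noteq> 0"
    by (simp add: c_def)
  ultimately show ?thesis
    using pq(1) by blast
qed

end

lemma nonassoc_algebra_vector_space: "nonassoc_algebra sm mul one \<Longrightarrow> vector_space sm"
  unfolding nonassoc_algebra_def module_iff_vector_space by blast

lemma nonassoc_algebra_mul_0:
  assumes "nonassoc_algebra sm mul one"
  shows "mul 0 x = 0" "mul x 0 = 0"
  using assms unfolding nonassoc_algebra_def by (metis add_cancel_right_right)+

lemma nonassoc_algebra_mul_sum_left:
  assumes alg: "nonassoc_algebra sm mul one"
  shows "mul (sum f A) z = (\<Sum>i\<in>A. mul (f i) z)"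
proof (induction A rule: infinite_finite_induct)
  case (insert x F)
  then show ?case
    using alg unfolding nonassoc_algebra_def by simp
qed (simp_all add: nonassoc_algebra_mul_0[OF alg])

lemma (in vector_space) subspace_centralizer:
  assumes "nonassoc_algebra scale mul one"
  shows "subspace (centralizer mul a)"
  using assms nonassoc_algebra_mul_0[OF assms]
  unfolding subspace_def centralizer_def nonassoc_algebra_def by simp

lemma mul_mem_centralizer:
  assumes a: "a \<in> nucleus mul" and x: "x \<in> centralizer mul a" and y: "y \<in> centralizer mul a"
  shows "mul x y \<in> centralizer mul a"
proof -
  have "mul (mul x y) a = mul x (mul y a)"
    using a unfolding nucleus_def by blast
  also have "\<dots> = mul x (mul a y)"
    using y unfolding centralizer_def by simp
  also have "\<dots> = mul (mul x a) y"
    using a unfolding nucleus_def by simp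
  also have "\<dots> = mul (mul a x) y"
    using x unfolding centralizer_def by simp
  also have "\<dots> = mul a (mul x y)"
    using a unfolding nucleus_def by simp
  finally show ?thesis
    unfolding centralizer_def by simp
qed

lemma alg_pow_mem_centralizer:
  assumes "a \<in> nucleus mul" "one \<in> centralizer mul a" "x \<in> centralizer mul a"
  shows "alg_pow mul one x n \<in> centralizer mul a"
  using assms by (induction n) (simp_all add: mul_mem_centralizer)

lemma pseudo_degree_int_valued:
  assumes "pseudo_degree mul \<chi>" "x \<noteq> 0"
  shows "\<exists>m::int. \<chi> x = ereal (real_of_int m)"
  using assms unfolding pseudo_degree_def by blast

lemma pseudo_degree_le_nat:
  assumes "pseudo_degree mul \<chi>"
  obtains d :: nat where "\<chi> x \<le> ereal (real d)"
proof (cases "x = 0")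
  case True
  then have "\<chi> x = -\<infinity>"
    using assms unfolding pseudo_degree_def by blast
  then show ?thesis
    using that[of 0] by simp
next
  case False
  then obtain m :: int where "\<chi> x = ereal (real_of_int m)"
    using pseudo_degree_int_valued[OF assms] by blast
  then show ?thesis
    using that[of "nat m"] by simp
qed

lemma pseudo_degree_one_le:
  assumes chi: "pseudo_degree mul \<chi>" and unit: "mul one one = one"
  shows "\<chi> one \<le> 0"
proof (cases "one = 0")
  case True
  then have "\<chi> one = -\<infinity>"
    using chi unfolding pseudo_degree_def by blast
  then show ?thesis
    by simp
next
  case False
  then obtain m :: int where m: "\<chi> one = ereal (real_of_int m)"
    using pseudo_degree_int_valued[OF chi] by blast
  have "\<chi> one = \<chi> one + \<chi> one"
    using chi unit unfolding pseudo_degree_def by metis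
  with m show ?thesis
    by simp
qed

lemma pseudo_degree_alg_pow_le:
  assumes chi: "pseudo_degree mul \<chi>" and one: "\<chi> one \<le> 0" and x: "\<chi> x \<le> ereal (real d)"
  shows "\<chi> (alg_pow mul one x i) \<le> ereal (real (i * d))"
proof (induction i)
  case 0
  then show ?case using one by (simp add: zero_ereal_def)
next
  case (Suc i)
  have "\<chi> (alg_pow mul one x (Suc i)) = \<chi> x + \<chi> (alg_pow mul one x i)"
    using chi unfolding pseudo_degree_def by simp
  also have "\<dots> \<le> ereal (real d) + ereal (real (i * d))"
    using x Suc by (rule add_mono)
  finally show ?case
    by simp
qed

lemma monomial_mem_centralizer:
  assumes alg: "nonassoc_algebra sm mul one" and a: "a \<in> nucleus mul"
    and x: "x \<in> centralizer mul a" and y: "y \<in> centralizer mul a"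
  shows "mul (alg_pow mul one x i) (alg_pow mul one y j) \<in> centralizer mul a"
proof -
  have "one \<in> centralizer mul a"
    using alg unfolding nonassoc_algebra_def centralizer_def by simp
  then show ?thesis
    using a x y by (intro mul_mem_centralizer alg_pow_mem_centralizer)
qed

lemma pseudo_degree_monomial_less:
  assumes chi: "pseudo_degree mul \<chi>" and unit: "mul one one = one"
    and x: "\<chi> x \<le> ereal (real dx)" and y: "\<chi> y \<le> ereal (real dy)" and "i \<le> N" "j \<le> N"
  shows "\<chi> (mul (alg_pow mul one x i) (alg_pow mul one y j)) < ereal (real (N * (dx + dy) + 1))"
proof -
  have one: "\<chi> one \<le> 0"
    by (rule pseudo_degree_one_le[OF chi unit])
  have "\<chi> (mul (alg_pow mul one x i) (alg_pow mul one y j)) =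
      \<chi> (alg_pow mul one x i) + \<chi> (alg_pow mul one y j)"
    using chi unfolding pseudo_degree_def by blast
  also have "\<dots> \<le> ereal (real (i * dx)) + ereal (real (j * dy))"
    by (intro add_mono pseudo_degree_alg_pow_le[OF chi one] x y)
  also have "\<dots> = ereal (real (i * dx + j * dy))"
    by simp
  also have "\<dots> \<le> ereal (real (N * (dx + dy)))"
    unfolding ereal_less_eq(3) of_nat_le_iff
    using \<open>i \<le> N\<close> \<open>j \<le> N\<close> by (simp add: add_mult_distrib2 add_mono mult_le_mono1)
  also have "\<dots> < ereal (real (N * (dx + dy) + 1))"
    by simp
  finally show ?thesis .
qed

definition bivariate_poly :: "nat \<Rightarrow> (nat \<times> nat \<Rightarrow> 'k::comm_monoid_add) \<Rightarrow> 'k poly poly" where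
  "bivariate_poly N c = (\<Sum>j\<le>N. monom (\<Sum>i\<le>N. monom (c (i, j)) i) j)"

lemma coeff_bivariate_poly:
  "coeff (bivariate_poly N c) j = (if j \<le> N then (\<Sum>i\<le>N. monom (c (i, j)) i) else 0)"
  unfolding bivariate_poly_def by (simp add: coeff_sum coeff_monom)

lemma coeff_coeff_bivariate_poly:
  "coeff (coeff (bivariate_poly N c) j) i = (if i \<le> N \<and> j \<le> N then c (i, j) else 0)"
  by (simp add: coeff_bivariate_poly coeff_sum coeff_monom)

lemma degree_bivariate_poly_le: "degree (bivariate_poly N c) \<le> N"
  by (rule degree_le) (simp add: coeff_bivariate_poly)

lemma degree_coeff_bivariate_poly_le: "degree (coeff (bivariate_poly N c) j) \<le> N"
  by (rule degree_le) (simp add: coeff_coeff_bivariate_poly)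

lemma bivariate_poly_neq_0:
  assumes "p \<in> {..N} \<times> {..N}" "c p \<noteq> 0"
  shows "bivariate_poly N c \<noteq> 0"
  using assms coeff_coeff_bivariate_poly[of N c "snd p" "fst p"] by (cases p) auto

lemma poly_eval1_eq_sum_atMost:
  assumes alg: "nonassoc_algebra sm mul one" and deg: "degree f \<le> M"
  shows "poly_eval1 sm mul one f x = (\<Sum>j\<le>M. sm (coeff f j) (alg_pow mul one x j))"
proof -
  interpret vector_space sm
    using alg by (rule nonassoc_algebra_vector_space)
  show ?thesis
    unfolding poly_eval1_def using deg
    by (intro sum.mono_neutral_left) (auto simp: coeff_eq_0)
qed

lemma poly_eval2_eq_sum_atMost:
  assumes alg: "nonassoc_algebra sm mul one" and deg: "degree P \<le> M"
  shows "poly_eval2 sm mul one P a b =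
    (\<Sum>i\<le>M. mul (poly_eval1 sm mul one (coeff P i) a) (alg_pow mul one b i))"
proof -
  interpret vector_space sm
    using alg by (rule nonassoc_algebra_vector_space)
  show ?thesis
    unfolding poly_eval2_def using deg
    by (intro sum.mono_neutral_left)
      (auto simp: coeff_eq_0 poly_eval1_def nonassoc_algebra_mul_0[OF alg])
qed

lemma poly_eval2_bivariate_poly:
  assumes alg: "nonassoc_algebra sm mul one"
  shows "poly_eval2 sm mul one (bivariate_poly N c) a b =
    (\<Sum>p\<in>{..N} \<times> {..N}. sm (c p) (mul (alg_pow mul one a (fst p)) (alg_pow mul one b (snd p))))"
proof -
  have scale_mul: "mul (sm r x) y = sm r (mul x y)" for r x y
    using alg unfolding nonassoc_algebra_def by blast
  have "poly_eval2 sm mul one (bivariate_poly N c) a b =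
      (\<Sum>j\<le>N. mul (\<Sum>i\<le>N. sm (c (i, j)) (alg_pow mul one a i)) (alg_pow mul one b j))"
    unfolding poly_eval2_eq_sum_atMost[OF alg degree_bivariate_poly_le]
      poly_eval1_eq_sum_atMost[OF alg degree_coeff_bivariate_poly_le]
    by (intro sum.cong refl) (simp add: coeff_coeff_bivariate_poly)
  also have "\<dots> = (\<Sum>j\<le>N. \<Sum>i\<le>N. sm (c (i, j)) (mul (alg_pow mul one a i) (alg_pow mul one b j)))"
    by (simp add: nonassoc_algebra_mul_sum_left[OF alg] scale_mul)
  also have "\<dots> = (\<Sum>i\<le>N. \<Sum>j\<le>N. sm (c (i, j)) (mul (alg_pow mul one a i) (alg_pow mul one b j)))"
    by (rule sum.swap)
  finally show ?thesis
    by (simp add: sum.cartesian_product case_prod_beta)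
qed

lemma linear_bound_lt_square:
  fixes l d :: nat
  defines "N \<equiv> l * (d + 1)"
  shows "l * (N * d + 1) < (N + 1) * (N + 1)"
proof -
  have "l * d \<le> N" "l \<le> N"
    unfolding N_def by simp_all
  then have "N * (l * d) + l \<le> N * N + N"
    using mult_le_mono2 add_le_mono by blast
  then show ?thesis
    by (simp add: algebra_simps)
qed

theorem corollary2p9:
  fixes sm :: "'k::field \<Rightarrow> 'a::ab_group_add \<Rightarrow> 'a"
    and mul :: "'a \<Rightarrow> 'a \<Rightarrow> 'a" and one :: 'a
    and \<chi> :: "'a \<Rightarrow> ereal" and l :: nat and a b :: 'a
  assumes "(2::'k) \<noteq> 0"
    and "nonassoc_algebra sm mul one"
    and "pseudo_degree mul \<chi>"
    and "a \<in> nucleus mul"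
    and "l > 0"
    and "cond_D sm \<chi> l (centralizer mul a)"
    and "b \<in> centralizer mul a \<inter> left_nucleus mul"
  shows "\<exists>P::'k poly poly. P \<noteq> 0 \<and> poly_eval2 sm mul one P a b = 0"
proof -
  note alg = assms(2) and chi = assms(3)
  interpret vector_space sm
    using alg by (rule nonassoc_algebra_vector_space)
  define mono where "mono p = mul (alg_pow mul one a (fst p)) (alg_pow mul one b (snd p))" for p
  have "a \<in> centralizer mul a" "b \<in> centralizer mul a"
    using assms(7) unfolding centralizer_def by auto
  then have mono_C: "mono ` ({..N} \<times> {..N}) \<subseteq> centralizer mul a" for N
    unfolding mono_def by (auto intro!: monomial_mem_centralizer[OF alg assms(4)])
  obtain da db :: nat where da: "\<chi> a \<le> ereal (real da)" and db: "\<chi> b \<le> ereal (real db)"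
    using pseudo_degree_le_nat[OF chi] by metis
  have unit: "mul one one = one"
    using alg unfolding nonassoc_algebra_def by blast
  define N where "N = l * (da + db + 1)"
  have "\<forall>p\<in>{..N} \<times> {..N}. \<chi> (mono p) < ereal (real (N * (da + db) + 1))"
    unfolding mono_def
    by (intro ballI pseudo_degree_monomial_less[OF chi unit da db]) (auto simp: mem_Times_iff)
  moreover have "l * (N * (da + db) + 1) < card ({..N} \<times> {..N})"
    using linear_bound_lt_square[of l "da + db"] unfolding N_def by (simp add: card_cartesian_product)
  ultimately obtain c where "\<exists>p\<in>{..N} \<times> {..N}. c p \<noteq> 0"
    and "(\<Sum>p\<in>{..N} \<times> {..N}. sm (c p) (mono p)) = 0"
    using cond_D_family_dependent[OF assms(6) subspace_centralizer[OF alg]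
        pseudo_degree_int_valued[OF chi] _ mono_C] by blast
  then show ?thesis
    using bivariate_poly_neq_0 poly_eval2_bivariate_poly[OF alg] unfolding mono_def by metis
qed

end
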